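(* Let $v$ be a weight on $[0,1)$ satisfying $\lim_{r\to1^-}v(r)=0$ and let $t\in[0,1)$. Identifying the bidual $(H^0_v)''$ with $H^\infty_v$ via the canonical isometric isomorphism, the bi-transpose $C_t''\colon H^\infty_v\to H^\infty_v$ of $C_t\colon H^0_v\to H^0_v$ coincides with $C_t\colon H^\infty_v\to H^\infty_v$.
   Context: $\mathbb{D}=\{z\in\mathbb{C}:|z|<1\}$ and $H(\mathbb{D})$ is the space of holomorphic functions on $\mathbb{D}$. A weight is a continuous non-increasing function $v\colon[0,1)\to(0,\infty)$, extended to $\mathbb{D}$ by $v(z):=v(|z|)$. $H^\infty_v=\{f\in H(\mathbb{D}):\|f\|_{\infty,v}:=\sup_{z\in\mathbb{D}}|f(z)|v(z)<\infty\}$ and $H^0_v=\{f\in H(\mathbb{D}):\lim_{|z|\to1^-}|f(z)|v(z)=0\}$, both with the norm $\|\cdot\|_{\infty,v}$. When $\lim_{r\to1^-}v(r)=0$, $H^\infty_v$ is canonically isometric to $(H^0_v)''$: letting $X$ be the Banach space of linear functionals on $H^\infty_v$ whose restriction to the closed unit ball $U_v$ of $H^\infty_v$ is continuous for the topology of uniform convergence on compact subsets of $\mathbb{D}$ (normed by $\sup_{f\in U_v}|F(f)|$), the restriction map $F\mapsto F|_{H^0_v}$ is an isometric isomorphism of $X$ onto $(H^0_v)'$, and the evaluation map $f\mapsto(F\mapsto F(f))$ is an isometric isomorphism of $H^\infty_v$ onto $X'$; composing gives $H^\infty_v\cong(H^0_v)''$. For $t\in[0,1]$ the generalized Cesàro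 operator $C_t$ is defined on $f\in H(\mathbb{D})$ by $C_tf(0)=f(0)$ and $C_tf(z)=\frac{1}{z}\int_0^z\frac{f(\xi)}{1-t\xi}\,d\xi$ for $z\neq0$; for $t\in[0,1)$ it maps $H^0_v$ and $H^\infty_v$ continuously into themselves. *)

theory Defs
  imports "HOL-Complex_Analysis.Complex_Analysis"
begin

definition weight :: "(real \<Rightarrow> real) \<Rightarrow> bool" where
  "weight v \<longleftrightarrow> continuous_on {0..<1} v
     \<and> (\<forall>r s. 0 \<le> r \<and> r \<le> s \<and> s < 1 \<longrightarrow> v s \<le> v r)
     \<and> (\<forall>r. 0 \<le> r \<and> r < 1 \<longrightarrow> v r > 0)"

definition Hinf :: "(real \<Rightarrow> real) \<Rightarrow> (complex \<Rightarrow> complex) set" where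
  "Hinf v = {f. f holomorphic_on ball 0 1 \<and>
      bounded ((\<lambda>z. norm (f z) * v (norm z)) ` ball 0 1)}"

definition H0 :: "(real \<Rightarrow> real) \<Rightarrow> (complex \<Rightarrow> complex) set" where
  "H0 v = {f. f holomorphic_on ball 0 1 \<and>
      (\<forall>e>0. \<exists>r<1. \<forall>z. r < norm z \<and> norm z < 1 \<longrightarrow> norm (f z) * v (norm z) < e)}"

definition wnorm :: "(real \<Rightarrow> real) \<Rightarrow> (complex \<Rightarrow> complex) \<Rightarrow> real" where
  "wnorm v f = (SUP z\<in>ball 0 1. norm (f z) * v (norm z))"

definition Uball :: "(real \<Rightarrow> real) \<Rightarrow> (complex \<Rightarrow> complex) set" where
  "Uball v = {f \<in> Hinf v. wnorm v f \<le> 1}"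

definition clinear_on ::
  "(complex \<Rightarrow> complex) set \<Rightarrow> ((complex \<Rightarrow> complex) \<Rightarrow> complex) \<Rightarrow> bool" where
  "clinear_on S F \<longleftrightarrow>
     (\<forall>f\<in>S. \<forall>g\<in>S. F (\<lambda>z. f z + g z) = F f + F g) \<and>
     (\<forall>f\<in>S. \<forall>c. F (\<lambda>z. c * f z) = c * F f)"

definition H0_dual :: "(real \<Rightarrow> real) \<Rightarrow> ((complex \<Rightarrow> complex) \<Rightarrow> complex) set" where
  "H0_dual v = {u. clinear_on (H0 v) u \<and>
      (\<exists>C. \<forall>f\<in>H0 v. norm (u f) \<le> C * wnorm v f)}"

text \<open>Continuity on Uball v for the topology of uniform convergence on compact subsets
  of the disc (basic neighbourhoods of f: uniform closeness on a compact K in the disc).\<close>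
definition cont_on_ball_co ::
  "(real \<Rightarrow> real) \<Rightarrow> ((complex \<Rightarrow> complex) \<Rightarrow> complex) \<Rightarrow> bool" where
  "cont_on_ball_co v F \<longleftrightarrow>
     (\<forall>f\<in>Uball v. \<forall>e>0. \<exists>K \<delta>. compact K \<and> K \<subseteq> ball 0 1 \<and> \<delta> > 0 \<and>
        (\<forall>g\<in>Uball v. (\<forall>z\<in>K. norm (g z - f z) < \<delta>) \<longrightarrow> norm (F g - F f) < e))"

definition Xspace :: "(real \<Rightarrow> real) \<Rightarrow> ((complex \<Rightarrow> complex) \<Rightarrow> complex) set" where
  "Xspace v = {F. clinear_on (Hinf v) F \<and> cont_on_ball_co v F}"

definition cesaro :: "real \<Rightarrow> (complex \<Rightarrow> complex) \<Rightarrow> (complex \<Rightarrow> complex)" where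
  "cesaro t f = (\<lambda>z. if z = 0 then f 0
      else contour_integral (linepath 0 z) (\<lambda>\<xi>. f \<xi> / (1 - of_real t * \<xi>)) / z)"

end

theory Submission
  imports Defs
begin

(* For f in H^inf_v, the dilations f_r(z) = f(r z), 0 <= r < 1, are bounded, so f_r and C_t f_r
   lie in H^0_v, where F and G are prescribed: F (C_t f_r) = u (C_t f_r) = G f_r. As r -> 1,
   f_r -> f and C_t f_r -> C_t f uniformly on compact subsets of the disc, inside fixed balls
   of H^inf_v. Functionals in X are continuous on such balls for this topology (rescale into
   the unit ball and use linearity), hence F (C_t f) = lim F (C_t f_r) = lim G f_r = G f. *)

lemma contour_integral_linepath_has_field_derivative:
  fixes f :: "complex \<Rightarrow> complex"
  assumes "f holomorphic_on S" "convex S" "open S" "a \<in> S" "x \<in> S"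
  shows "((\<lambda>x. contour_integral (linepath a x) f) has_field_derivative f x) (at x)"
proof -
  have "((\<lambda>x. contour_integral (linepath a x) f) has_field_derivative f x) (at x within S)"
  proof (rule triangle_contour_integrals_convex_primitive)
    fix b c assume "b \<in> S" "c \<in> S"
    then have "f holomorphic_on convex hull {a, b, c}"
      using assms by (intro holomorphic_on_subset[OF assms(1)] hull_minimal) auto
    then show "contour_integral (linepath a b) f + contour_integral (linepath b c) f +
        contour_integral (linepath c a) f = 0"
      by (intro has_chain_integral_chain_integral3 Cauchy_theorem_triangle)
  qed (use assms in \<open>auto intro: holomorphic_on_imp_continuous_on\<close>)
  then show ?thesis
    using assms at_within_open by metis
qed

lemma compact_subset_ball_imp_subset_cball:
  fixes K :: "'a::real_normed_vector set"
  assumes "compact K" "K \<subseteq> ball 0 1"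
  obtains \<rho> where "\<rho> < 1" "K \<subseteq> cball 0 \<rho>"
proof (cases "K = {}")
  case True
  then show ?thesis using that[of 0] by auto
next
  case False
  have "compact (norm ` K)"
    by (intro compact_continuous_image continuous_intros assms(1))
  then obtain s where "s \<in> norm ` K" "\<forall>y\<in>norm ` K. y \<le> s"
    using compact_attains_sup[of "norm ` K"] False by blast
  then show ?thesis
    using assms(2) that[of s] by force
qed

definition weighted_ball :: "(real \<Rightarrow> real) \<Rightarrow> real \<Rightarrow> (complex \<Rightarrow> complex) set" where
  "weighted_ball v R = {f. f holomorphic_on ball 0 1 \<and>
      (\<forall>z\<in>ball 0 1. norm (f z) * v (norm z) \<le> R)}"

lemma weight_pos: "weight v \<Longrightarrow> 0 \<le> r \<Longrightarrow> r < 1 \<Longrightarrow> 0 < v r"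
  unfolding weight_def by blast

lemma weight_antimono: "weight v \<Longrightarrow> 0 \<le> r \<Longrightarrow> r \<le> s \<Longrightarrow> s < 1 \<Longrightarrow> v s \<le> v r"
  unfolding weight_def by blast

lemma weighted_ball_subset_Hinf:
  assumes "weight v"
  shows "weighted_ball v R \<subseteq> Hinf v"
proof
  fix f assume f: "f \<in> weighted_ball v R"
  have "\<bar>norm (f z) * v (norm z)\<bar> \<le> R" if "z \<in> ball 0 1" for z
    using f that weight_pos[OF assms, of "norm z"] by (auto simp: weighted_ball_def)
  then have "bounded ((\<lambda>z. norm (f z) * v (norm z)) ` ball 0 1)"
    unfolding bounded_iff by (intro exI[of _ R]) (auto simp del: abs_mult)
  then show "f \<in> Hinf v"
    using f by (simp add: Hinf_def weighted_ball_def)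
qed

lemma Hinf_in_weighted_ball: "f \<in> Hinf v \<Longrightarrow> f \<in> weighted_ball v (wnorm v f)"
  unfolding weighted_ball_def Hinf_def wnorm_def
  by (auto intro!: cSUP_upper bounded_imp_bdd_above)

lemma weighted_ball_mono: "R \<le> S \<Longrightarrow> weighted_ball v R \<subseteq> weighted_ball v S"
  unfolding weighted_ball_def by force

lemma weighted_ball_one_subset_Uball:
  assumes "weight v"
  shows "weighted_ball v 1 \<subseteq> Uball v"
  using weighted_ball_subset_Hinf[OF assms]
  by (auto simp: Uball_def weighted_ball_def wnorm_def intro!: cSUP_least)

lemma weighted_ball_cmult:
  assumes "f \<in> weighted_ball v R" "0 \<le> c"
  shows "(\<lambda>z. of_real c * f z) \<in> weighted_ball v (c * R)"
  using assms unfolding weighted_ball_def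
  by (auto simp: norm_mult mult.assoc intro!: holomorphic_intros mult_left_mono)

lemma bounded_holomorphic_in_H0:
  assumes "weight v" "(v \<longlongrightarrow> 0) (at_left 1)" "f holomorphic_on ball 0 1"
    and "\<And>z. z \<in> ball 0 1 \<Longrightarrow> norm (f z) \<le> B"
  shows "f \<in> H0 v"
proof -
  have "\<exists>r<1. \<forall>z. r < norm z \<and> norm z < 1 \<longrightarrow> norm (f z) * v (norm z) < e" if "e > 0" for e
  proof -
    have B: "0 \<le> B"
      using assms(4)[of 0] by (meson centre_in_ball norm_ge_zero order_trans zero_less_one)
    have "\<forall>\<^sub>F r in at_left 1. v r < e / (B + 1)"
      using order_tendstoD(2)[OF assms(2)] \<open>e > 0\<close> B by simp
    then obtain b where b: "b < 1" "\<And>r. b < r \<Longrightarrow> r < 1 \<Longrightarrow> v r < e / (B + 1)"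
      by (auto simp: eventually_at_left_field)
    have "norm (f z) * v (norm z) < e" if z: "b < norm z" "norm z < 1" for z
    proof -
      have "norm (f z) * v (norm z) \<le> B * (e / (B + 1))"
        using z b(2)[of "norm z"] assms(4) weight_pos[OF assms(1), of "norm z"] B
        by (intro mult_mono) auto
      also have "\<dots> < e"
        using \<open>e > 0\<close> B by (simp add: field_simps)
      finally show ?thesis .
    qed
    then show ?thesis
      using b(1) by blast
  qed
  then show ?thesis
    using assms(3) by (simp add: H0_def)
qed

section \<open>The Cesaro operator\<close>

lemma norm_one_minus_mult_ge:
  assumes "0 \<le> t" "norm (\<xi>::complex) \<le> 1"
  shows "1 - t \<le> norm (1 - of_real t * \<xi>)"
proof -
  have "norm (of_real t * \<xi>) \<le> t"
    using assms by (simp add: norm_mult mult_left_le)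
  moreover have "1 - norm (of_real t * \<xi>) \<le> norm (1 - of_real t * \<xi>)"
    by (metis norm_one norm_triangle_ineq2)
  ultimately show ?thesis by linarith
qed

lemma cesaro_integrand_holomorphic:
  assumes "g holomorphic_on ball 0 1" "0 \<le> t" "t < 1"
  shows "(\<lambda>\<xi>. g \<xi> / (1 - of_real t * \<xi>)) holomorphic_on ball 0 1"
proof (intro holomorphic_intros assms(1))
  fix \<xi> :: complex assume "\<xi> \<in> ball 0 1"
  then have "1 - t \<le> norm (1 - of_real t * \<xi>)"
    using norm_one_minus_mult_ge assms by simp
  then show "1 - of_real t * \<xi> \<noteq> 0"
    using assms by auto
qed

lemma cesaro_holomorphic:
  assumes "g holomorphic_on ball 0 1" "0 \<le> t" "t < 1"
  shows "cesaro t g holomorphic_on ball 0 1"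
proof -
  define h where "h = (\<lambda>\<xi>. g \<xi> / (1 - of_real t * \<xi>))"
  define H where "H = (\<lambda>z. contour_integral (linepath 0 z) h)"
  have H': "(H has_field_derivative h z) (at z)" if "z \<in> ball 0 1" for z
    unfolding H_def using cesaro_integrand_holomorphic[OF assms] that
    by (intro contour_integral_linepath_has_field_derivative) (auto simp: h_def)
  then have "H holomorphic_on ball 0 1"
    using holomorphic_on_open field_differentiable_def by blast
  then have "(\<lambda>z. H z / z) holomorphic_on ball 0 1 - {0}"
    by (intro holomorphic_intros) (auto intro: holomorphic_on_subset)
  then have punctured: "cesaro t g holomorphic_on ball 0 1 - {0}"
    by (rule holomorphic_transform) (auto simp: cesaro_def H_def h_def)
  \<comment> \<open>At the origin, H z / z is a difference quotient of H, so it tends to H'(0) = g 0.\<close>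
  have "((\<lambda>z. (H z - H 0) / (z - 0)) \<longlongrightarrow> h 0) (at 0)"
    using H'[of 0] by (simp add: DERIV_def)
  then have "((\<lambda>z. H z / z) \<longlongrightarrow> g 0) (at 0)"
    by (simp add: H_def h_def)
  then have "(cesaro t g \<longlongrightarrow> g 0) (at 0)"
    by (rule Lim_transform_eventually)
       (auto simp: eventually_at_filter cesaro_def H_def h_def)
  then have "(cesaro t g \<longlongrightarrow> cesaro t g 0) (at 0 within ball 0 1)"
    by (auto simp: cesaro_def intro: tendsto_within_subset)
  then show ?thesis
    by (intro no_isolated_singularity'[OF _ punctured]) auto
qed

lemma norm_cesaro_le:
  assumes "g holomorphic_on ball 0 1" "z \<in> ball 0 1" "0 \<le> t" "t < 1" "0 \<le> B"
    and "\<And>\<xi>. \<xi> \<in> closed_segment 0 z \<Longrightarrow> norm (g \<xi>) \<le> B"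
  shows "norm (cesaro t g z) \<le> B / (1 - t)"
proof (cases "z = 0")
  case True
  have "B \<le> B / (1 - t)"
    using assms(3-5) by (simp add: le_divide_eq mult_left_le)
  then show ?thesis
    using True assms(6)[of 0] by (simp add: cesaro_def)
next
  case False
  define h where "h = (\<lambda>\<xi>. g \<xi> / (1 - of_real t * \<xi>))"
  have seg: "closed_segment 0 z \<subseteq> ball 0 1"
    using assms(2) by (meson convex_ball convex_contains_segment centre_in_ball zero_less_one)
  have "continuous_on (closed_segment 0 z) h"
    using cesaro_integrand_holomorphic[OF assms(1,3,4)] seg unfolding h_def
    by (meson holomorphic_on_imp_continuous_on continuous_on_subset)
  then have "(h has_contour_integral contour_integral (linepath 0 z) h) (linepath 0 z)"
    by (intro has_contour_integral_integral contour_integrable_continuous_linepath)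
  moreover have "norm (h \<xi>) \<le> B / (1 - t)" if "\<xi> \<in> closed_segment 0 z" for \<xi>
  proof -
    have "1 - t \<le> norm (1 - of_real t * \<xi>)"
      using seg that assms(3) by (intro norm_one_minus_mult_ge) auto
    then show ?thesis
      using assms(4,5) assms(6)[OF that] by (auto simp: h_def norm_divide intro: frac_le)
  qed
  ultimately have "norm (contour_integral (linepath 0 z) h) \<le> B / (1 - t) * norm (z - 0)"
    using assms(4,5) by (intro has_contour_integral_bound_linepath) auto
  then show ?thesis
    using False assms(4) by (simp add: cesaro_def h_def norm_divide divide_simps)
qed

lemma cesaro_diff:
  assumes "g holomorphic_on ball 0 1" "k holomorphic_on ball 0 1" "z \<in> ball 0 1"
    and "0 \<le> t" "t < 1"
  shows "cesaro t g z - cesaro t k z = cesaro t (\<lambda>\<xi>. g \<xi> - k \<xi>) z"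
proof (cases "z = 0")
  case False
  have integrable: "(\<lambda>\<xi>. q \<xi> / (1 - of_real t * \<xi>)) contour_integrable_on linepath 0 z"
    if "q holomorphic_on ball 0 1" for q
    using cesaro_integrand_holomorphic[OF that assms(4,5)] assms(3)
    by (intro contour_integrable_continuous_linepath)
      (meson holomorphic_on_imp_continuous_on continuous_on_subset convex_ball
        convex_contains_segment centre_in_ball zero_less_one)
  show ?thesis
    using False contour_integral_diff[OF integrable[OF assms(1)] integrable[OF assms(2)]]
    by (simp add: cesaro_def diff_divide_distrib)
qed (simp add: cesaro_def)

lemma cesaro_weighted_ball:
  assumes "weight v" "0 \<le> t" "t < 1" "g \<in> weighted_ball v M"
  shows "cesaro t g \<in> weighted_ball v (M / (1 - t))"
proof -
  have g: "g holomorphic_on ball 0 1" "\<And>z. z \<in> ball 0 1 \<Longrightarrow> norm (g z) * v (norm z) \<le> M"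
    using assms(4) by (auto simp: weighted_ball_def)
  have "norm (cesaro t g z) * v (norm z) \<le> M / (1 - t)" if z: "z \<in> ball 0 1" for z
  proof -
    have vz: "0 < v (norm z)"
      using weight_pos[OF assms(1)] z by simp
    \<comment> \<open>Since v is non-increasing, the weighted bound at \<xi> controls g on the segment [0, z].\<close>
    have "norm (g \<xi>) \<le> M / v (norm z)" if \<xi>: "\<xi> \<in> closed_segment 0 z" for \<xi>
    proof -
      have "norm \<xi> \<le> norm z"
        using segment_bound1[OF \<xi>] by simp
      then have "norm (g \<xi>) * v (norm z) \<le> norm (g \<xi>) * v (norm \<xi>)"
        using weight_antimono[OF assms(1)] z by (simp add: mult_left_mono)
      also have "\<dots> \<le> M"
        using g(2) \<open>norm \<xi> \<le> norm z\<close> z by simp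
      finally show ?thesis
        using vz by (simp add: field_simps)
    qed
    moreover have "0 \<le> M / v (norm z)"
      using calculation[of 0] by (meson ends_in_segment(1) norm_ge_zero order_trans)
    ultimately have "norm (cesaro t g z) \<le> M / v (norm z) / (1 - t)"
      using g(1) z assms(2,3) by (intro norm_cesaro_le) auto
    then show ?thesis
      using vz assms(3) by (simp add: field_simps)
  qed
  then show ?thesis
    using cesaro_holomorphic[OF g(1) assms(2,3)] by (simp add: weighted_ball_def)
qed

lemma norm_cesaro_le_of_bounded:
  assumes "g holomorphic_on ball 0 1" "0 \<le> t" "t < 1"
    and "\<And>z. z \<in> ball 0 1 \<Longrightarrow> norm (g z) \<le> B" "z \<in> ball 0 1"
  shows "norm (cesaro t g z) \<le> B / (1 - t)"
proof (rule norm_cesaro_le[OF assms(1,5,2,3)])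
  show "0 \<le> B"
    using assms(4)[of 0] by (meson centre_in_ball norm_ge_zero order_trans zero_less_one)
  show "norm (g \<xi>) \<le> B" if "\<xi> \<in> closed_segment 0 z" for \<xi>
    using assms(4,5) that
    by (meson convex_ball convex_contains_segment centre_in_ball zero_less_one subsetD)
qed

section \<open>Convergence uniform on compact subsets of the disc\<close>

definition uniform_limit_on_compacts ::
  "('a \<Rightarrow> complex \<Rightarrow> complex) \<Rightarrow> (complex \<Rightarrow> complex) \<Rightarrow> 'a filter \<Rightarrow> bool" where
  "uniform_limit_on_compacts h f F \<longleftrightarrow>
     (\<forall>K. compact K \<and> K \<subseteq> ball 0 1 \<longrightarrow> uniform_limit K h f F)"

lemma uniform_limit_on_compacts_cesaro:
  assumes "0 \<le> t" "t < 1" "g holomorphic_on ball 0 1"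
    and "\<forall>\<^sub>F x in F. h x holomorphic_on ball 0 1" "uniform_limit_on_compacts h g F"
  shows "uniform_limit_on_compacts (\<lambda>x. cesaro t (h x)) (cesaro t g) F"
  unfolding uniform_limit_on_compacts_def
proof (intro allI impI uniform_limitI)
  fix K :: "complex set" and e :: real
  assume K: "compact K \<and> K \<subseteq> ball 0 1" and "0 < e"
  then obtain \<rho> where "\<rho> < 1" "K \<subseteq> cball 0 \<rho>"
    using compact_subset_ball_imp_subset_cball by blast
  have "cball 0 \<rho> \<subseteq> ball (0::complex) 1"
    using \<open>\<rho> < 1\<close> by auto
  then have "uniform_limit (cball 0 \<rho>) h g F"
    using assms(5) by (simp add: uniform_limit_on_compacts_def)
  then have "\<forall>\<^sub>F x in F. \<forall>\<xi>\<in>cball 0 \<rho>. dist (h x \<xi>) (g \<xi>) < e * (1 - t) / 2"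
    using \<open>0 < e\<close> assms(2) by (intro uniform_limitD) auto
  with assms(4) show "\<forall>\<^sub>F x in F. \<forall>z\<in>K. dist (cesaro t (h x) z) (cesaro t g z) < e"
  proof eventually_elim
    case (elim x)
    show ?case
    proof
      fix z assume "z \<in> K"
      then have z: "z \<in> ball 0 1" "norm z \<le> \<rho>"
        using K \<open>K \<subseteq> cball 0 \<rho>\<close> by auto
      have seg: "\<xi> \<in> cball 0 \<rho>" if "\<xi> \<in> closed_segment 0 z" for \<xi>
        using segment_bound1[OF that] z(2) by simp
      have "norm (cesaro t (\<lambda>\<xi>. h x \<xi> - g \<xi>) z) \<le> e * (1 - t) / 2 / (1 - t)"
        using elim seg z(1) \<open>0 < e\<close> assms(1,2)
        by (intro norm_cesaro_le) (auto intro!: holomorphic_intros assms(3) simp: dist_norm less_imp_le)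
      also have "\<dots> < e"
        using \<open>0 < e\<close> assms(2) by (simp add: field_simps)
      finally show "dist (cesaro t (h x) z) (cesaro t g z) < e"
        using cesaro_diff[OF elim(1) assms(3) z(1) assms(1,2)] by (simp add: dist_norm)
    qed
  qed
qed

definition dilate :: "real \<Rightarrow> (complex \<Rightarrow> complex) \<Rightarrow> complex \<Rightarrow> complex" where
  "dilate r f z = f (of_real r * z)"

lemma norm_dilate_arg_le: "0 \<le> r \<Longrightarrow> r \<le> 1 \<Longrightarrow> norm (of_real r * z :: complex) \<le> norm z"
  by (simp add: norm_mult mult_left_le_one_le)

lemma dilate_holomorphic:
  assumes "f holomorphic_on ball 0 1" "0 \<le> r" "r \<le> 1"
  shows "dilate r f holomorphic_on ball 0 1"
proof -
  have "(f \<circ> (\<lambda>z. of_real r * z)) holomorphic_on ball 0 1"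
    by (intro holomorphic_on_compose_gen[OF _ assms(1)])
      (auto intro!: holomorphic_intros intro: le_less_trans[OF norm_dilate_arg_le[OF assms(2,3)]])
  then show ?thesis
    by (simp add: dilate_def[abs_def] o_def)
qed

lemma dilate_weighted_ball:
  assumes "weight v" "0 \<le> r" "r \<le> 1" "f \<in> weighted_ball v M"
  shows "dilate r f \<in> weighted_ball v M"
proof -
  have "norm (dilate r f z) * v (norm z) \<le> M" if z: "z \<in> ball 0 1" for z
  proof -
    have rz: "norm (of_real r * z) \<le> norm z"
      using norm_dilate_arg_le[OF assms(2,3)] .
    then have "v (norm z) \<le> v (norm (of_real r * z))"
      using weight_antimono[OF assms(1)] z by simp
    then have "norm (dilate r f z) * v (norm z) \<le> norm (f (of_real r * z)) * v (norm (of_real r * z))"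
      by (simp add: dilate_def mult_left_mono)
    also have "\<dots> \<le> M"
      using assms(4) rz z by (simp add: weighted_ball_def)
    finally show ?thesis .
  qed
  then show ?thesis
    using assms dilate_holomorphic by (simp add: weighted_ball_def)
qed

lemma dilate_bounded:
  assumes "continuous_on (ball 0 1) f" "0 \<le> r" "r < 1"
  obtains B where "\<And>z. z \<in> ball 0 1 \<Longrightarrow> norm (dilate r f z) \<le> B"
proof -
  have "compact (f ` cball 0 r)"
    using assms by (intro compact_continuous_image continuous_on_subset[OF assms(1)]) auto
  then obtain B where B: "\<And>w. w \<in> cball 0 r \<Longrightarrow> norm (f w) \<le> B"
    by (meson bounded_iff compact_imp_bounded imageI)
  have r: "norm (of_real r * z) \<le> r" if "z \<in> ball 0 1" for z :: complex
    using that assms(2) by (simp add: norm_mult mult_left_le)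
  show ?thesis
    by (intro that[of B]) (simp add: dilate_def B r)
qed

lemma uniform_limit_on_compacts_dilate:
  assumes "continuous_on (ball 0 1) f"
  shows "uniform_limit_on_compacts (\<lambda>r. dilate r f) f (at_left 1)"
  unfolding uniform_limit_on_compacts_def
proof (intro allI impI uniform_limitI)
  fix K :: "complex set" and e :: real
  assume K: "compact K \<and> K \<subseteq> ball 0 1" and "0 < e"
  then obtain \<rho> where "\<rho> < 1" "K \<subseteq> cball 0 \<rho>"
    using compact_subset_ball_imp_subset_cball by blast
  have "uniformly_continuous_on (cball 0 \<rho>) f"
    using \<open>\<rho> < 1\<close> by (intro compact_uniformly_continuous continuous_on_subset[OF assms]) auto
  then obtain d where "0 < d"
    and d: "\<And>w w'. w \<in> cball 0 \<rho> \<Longrightarrow> w' \<in> cball 0 \<rho> \<Longrightarrow> dist w' w < d \<Longrightarrow> dist (f w') (f w) < e"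
    using \<open>0 < e\<close> unfolding uniformly_continuous_on_def by metis
  have "\<forall>\<^sub>F r in at_left 1. r \<in> {max 0 (1 - d)<..<1}"
    using \<open>0 < d\<close> by (intro eventually_at_left_real) simp
  then show "\<forall>\<^sub>F r in at_left 1. \<forall>z\<in>K. dist (dilate r f z) (f z) < e"
  proof eventually_elim
    case (elim r)
    show ?case
    proof
      fix z assume "z \<in> K"
      then have z: "z \<in> cball 0 \<rho>" "norm z < 1"
        using K \<open>K \<subseteq> cball 0 \<rho>\<close> by auto
      have "dist (of_real r * z) z = norm (of_real (1 - r) * z)"
        by (simp add: dist_norm norm_minus_commute algebra_simps)
      also have "\<dots> = (1 - r) * norm z"
        using elim by (simp only: norm_mult norm_of_real) simp
      also have "\<dots> \<le> 1 - r"
        using elim z(2) by (simp add: mult_left_le)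
      also have "\<dots> < d"
        using elim by simp
      finally have "dist (of_real r * z) z < d" .
      moreover have "of_real r * z \<in> cball 0 \<rho>"
        using z(1) elim norm_dilate_arg_le[of r z] by auto
      ultimately show "dist (dilate r f z) (f z) < e"
        using d z(1) by (simp add: dilate_def)
    qed
  qed
qed

lemma dilate_in_H0:
  assumes "weight v" "(v \<longlongrightarrow> 0) (at_left 1)" "f holomorphic_on ball 0 1"
    and "0 \<le> r" "r < 1" "0 \<le> t" "t < 1"
  shows "dilate r f \<in> H0 v" "cesaro t (dilate r f) \<in> H0 v"
proof -
  obtain B where B: "\<And>z. z \<in> ball 0 1 \<Longrightarrow> norm (dilate r f z) \<le> B"
    using dilate_bounded[OF holomorphic_on_imp_continuous_on[OF assms(3)] assms(4,5)] by blast
  have hol: "dilate r f holomorphic_on ball 0 1"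
    using dilate_holomorphic[OF assms(3,4)] assms(5) by simp
  show "dilate r f \<in> H0 v"
    using bounded_holomorphic_in_H0[OF assms(1,2) hol B] .
  show "cesaro t (dilate r f) \<in> H0 v"
    using bounded_holomorphic_in_H0[OF assms(1,2) cesaro_holomorphic[OF hol assms(6,7)]]
      norm_cesaro_le_of_bounded[OF hol assms(6,7) B] by blast
qed

lemma eventually_dilate_weighted_ball:
  assumes "weight v" "f \<in> weighted_ball v M"
  shows "\<forall>\<^sub>F r in at_left 1. dilate r f \<in> weighted_ball v M"
proof -
  have "\<forall>\<^sub>F r in at_left 1. 0 \<le> r \<and> r < (1::real)"
    by (rule eventually_mono[OF eventually_at_left_real[of 0 1]]) auto
  then show ?thesis
    by (rule eventually_mono) (simp add: dilate_weighted_ball[OF assms(1) _ _ assms(2)])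
qed

section \<open>Continuity of the functionals in X\<close>

lemma cont_on_ball_co_tendsto:
  assumes "cont_on_ball_co v F" "g \<in> Uball v" "\<forall>\<^sub>F x in Fi. h x \<in> Uball v"
    and "uniform_limit_on_compacts h g Fi"
  shows "((\<lambda>x. F (h x)) \<longlongrightarrow> F g) Fi"
proof (rule tendstoI)
  fix e :: real assume "0 < e"
  then obtain K \<delta> where K: "compact K" "K \<subseteq> ball 0 1" "0 < \<delta>"
    and close: "\<forall>k\<in>Uball v. (\<forall>z\<in>K. norm (k z - g z) < \<delta>) \<longrightarrow> norm (F k - F g) < e"
    using assms(1)[unfolded cont_on_ball_co_def, rule_format, OF assms(2) \<open>0 < e\<close>]
    by (elim exE conjE) (rule that)
  have "\<forall>\<^sub>F x in Fi. \<forall>z\<in>K. dist (h x z) (g z) < \<delta>"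
    using assms(4) K by (intro uniform_limitD) (auto simp: uniform_limit_on_compacts_def)
  with assms(3) show "\<forall>\<^sub>F x in Fi. dist (F (h x)) (F g) < e"
    by eventually_elim (simp add: close[rule_format] dist_norm)
qed

lemma Xspace_tendsto:
  assumes "weight v" "F \<in> Xspace v" "g \<in> weighted_ball v R"
    and "\<forall>\<^sub>F x in Fi. h x \<in> weighted_ball v R" "uniform_limit_on_compacts h g Fi"
  shows "((\<lambda>x. F (h x)) \<longlongrightarrow> F g) Fi"
proof -
  \<comment> \<open>Rescale into the unit ball, where F is continuous, and undo the scaling by linearity.\<close>
  define c where "c = 1 / (\<bar>R\<bar> + 1)"
  have c: "0 < c" "c * R \<le> 1"
    by (auto simp: c_def field_simps)
  have in_Uball: "(\<lambda>z. of_real c * k z) \<in> Uball v" if "k \<in> weighted_ball v R" for k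
    using weighted_ball_cmult[OF that, of c] weighted_ball_mono[OF c(2)]
      weighted_ball_one_subset_Uball[OF assms(1)] c(1) by auto
  have linear: "F (\<lambda>z. of_real c * k z) = of_real c * F k" if "k \<in> weighted_ball v R" for k
    using assms(2) subsetD[OF weighted_ball_subset_Hinf[OF assms(1)] that]
    by (simp add: Xspace_def clinear_on_def)
  have limit: "uniform_limit_on_compacts (\<lambda>x z. of_real c * h x z) (\<lambda>z. of_real c * g z) Fi"
    using assms(5) by (auto simp: uniform_limit_on_compacts_def intro: uniform_limit_intros)
  have eventually_Uball: "\<forall>\<^sub>F x in Fi. (\<lambda>z. of_real c * h x z) \<in> Uball v"
    using assms(4) by (rule eventually_mono) (rule in_Uball)
  have "cont_on_ball_co v F"
    using assms(2) by (simp add: Xspace_def)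
  then have "((\<lambda>x. F (\<lambda>z. of_real c * h x z)) \<longlongrightarrow> F (\<lambda>z. of_real c * g z)) Fi"
    using in_Uball[OF assms(3)] eventually_Uball limit by (rule cont_on_ball_co_tendsto)
  moreover have "\<forall>\<^sub>F x in Fi. F (\<lambda>z. of_real c * h x z) = of_real c * F (h x)"
    using assms(4) by (rule eventually_mono) (rule linear)
  ultimately have "((\<lambda>x. of_real c * F (h x)) \<longlongrightarrow> of_real c * F g) Fi"
    unfolding linear[OF assms(3)] by (rule Lim_transform_eventually)
  then show ?thesis
    using c(1) by simp
qed

lemma Xspace_tendsto_dilate:
  assumes "weight v" "F \<in> Xspace v" "f \<in> weighted_ball v M"
  shows "((\<lambda>r. F (dilate r f)) \<longlongrightarrow> F f) (at_left 1)"
  using assms(3)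
  by (intro Xspace_tendsto[OF assms(1-3) eventually_dilate_weighted_ball[OF assms(1,3)]]
      uniform_limit_on_compacts_dilate holomorphic_on_imp_continuous_on)
    (simp add: weighted_ball_def)

lemma Xspace_tendsto_cesaro_dilate:
  assumes "weight v" "0 \<le> t" "t < 1" "F \<in> Xspace v" "f \<in> weighted_ball v M"
  shows "((\<lambda>r. F (cesaro t (dilate r f))) \<longlongrightarrow> F (cesaro t f)) (at_left 1)"
proof (rule Xspace_tendsto[OF assms(1,4)])
  have f: "f holomorphic_on ball 0 1"
    using assms(5) by (simp add: weighted_ball_def)
  have dilates: "\<forall>\<^sub>F r in at_left 1. dilate r f \<in> weighted_ball v M"
    using eventually_dilate_weighted_ball[OF assms(1,5)] .
  show "cesaro t f \<in> weighted_ball v (M / (1 - t))"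
    using cesaro_weighted_ball[OF assms(1-3,5)] .
  show "\<forall>\<^sub>F r in at_left 1. cesaro t (dilate r f) \<in> weighted_ball v (M / (1 - t))"
    using dilates by (rule eventually_mono) (rule cesaro_weighted_ball[OF assms(1-3)])
  show "uniform_limit_on_compacts (\<lambda>r. cesaro t (dilate r f)) (cesaro t f) (at_left 1)"
    using dilates uniform_limit_on_compacts_dilate[OF holomorphic_on_imp_continuous_on[OF f]]
    by (intro uniform_limit_on_compacts_cesaro[OF assms(2,3) f])
      (auto simp: weighted_ball_def elim: eventually_mono)
qed

theorem lemma2p6:
  fixes v :: "real \<Rightarrow> real" and t :: real
  assumes "weight v"
    and "(v \<longlongrightarrow> 0) (at_left 1)"
    and "0 \<le> t" and "t < 1"
  shows "\<forall>f\<in>Hinf v. \<forall>u\<in>H0_dual v. \<forall>F\<in>Xspace v. \<forall>G\<in>Xspace v.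
           (\<forall>g\<in>H0 v. F g = u g) \<longrightarrow> (\<forall>g\<in>H0 v. G g = u (cesaro t g)) \<longrightarrow>
           F (cesaro t f) = G f"
proof (intro ballI impI)
  fix f u F G
  assume "f \<in> Hinf v" "u \<in> H0_dual v" "F \<in> Xspace v" "G \<in> Xspace v"
    and F_u: "\<forall>g\<in>H0 v. F g = u g" and G_u: "\<forall>g\<in>H0 v. G g = u (cesaro t g)"
  have f: "f \<in> weighted_ball v (wnorm v f)"
    using Hinf_in_weighted_ball[OF \<open>f \<in> Hinf v\<close>] .
  have "f holomorphic_on ball 0 1"
    using f by (simp add: weighted_ball_def)
  have "\<forall>\<^sub>F r in at_left 1. 0 \<le> r \<and> r < (1::real)"
    by (rule eventually_mono[OF eventually_at_left_real[of 0 1]]) auto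
  then have "\<forall>\<^sub>F r in at_left 1. F (cesaro t (dilate r f)) = G (dilate r f)"
    by (rule eventually_mono)
      (simp add: F_u G_u dilate_in_H0[OF assms(1,2) \<open>f holomorphic_on ball 0 1\<close> _ _ assms(3,4)])
  with Xspace_tendsto_cesaro_dilate[OF assms(1,3,4) \<open>F \<in> Xspace v\<close> f]
  have "((\<lambda>r. G (dilate r f)) \<longlongrightarrow> F (cesaro t f)) (at_left 1)"
    by (rule Lim_transform_eventually)
  then show "F (cesaro t f) = G f"
    using Xspace_tendsto_dilate[OF assms(1) \<open>G \<in> Xspace v\<close> f]
    by (rule tendsto_unique[OF trivial_limit_at_left_real])
qed

end
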